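(* Let $k$ be a positive integer. Let $N>0$, $\tau=x+iy$ with $y=\frac{1}{4\sqrt N}$ and $y\le|x|\le\frac12$. Then \[ |F_k(q)|\ll N^{1/2}e^{\frac\pi4\sqrt N}. \]
   Context: $q=e^{2\pi i\tau}$, $(a;q)_\infty=\prod_{j\ge1}(1-aq^{j-1})$, $f_{0,a,b}(\tau)=\sum_{n=1}^\infty(-1)^nq^{(an^2+bn)/2}$, and \[ F_k(q)=\frac{(-q;q)_\infty}{(q;q)_\infty}\Big[2f_{0,2,4k-2}(\tau)-f_{0,1,4k-1}(\tau)-f_{0,1,4k-3}(\tau)\Big]. \] The implied constant is independent of $N$ and $x$. *)

theory Defs
  imports "HOL-Analysis.Analysis"
begin

definition nome :: "complex \<Rightarrow> complex" where
  "nome \<tau> = exp (2 * pi * \<i> * \<tau>)"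

definition qpoch_inf :: "complex \<Rightarrow> complex \<Rightarrow> complex" where
  "qpoch_inf a q = (\<Prod>j. 1 - a * q ^ j)"

text \<open>f_{0,a,b}(tau) = sum_{n>=1} (-1)^n q^((a n^2 + b n)/2), where
  q^r := exp(2 pi i tau r).\<close>
definition f0 :: "int \<Rightarrow> int \<Rightarrow> complex \<Rightarrow> complex" where
  "f0 a b \<tau> = (\<Sum>m. let n = Suc m in
      (-1) ^ n * exp (2 * pi * \<i> * \<tau> * of_real ((of_int a * real n ^ 2 + of_int b * real n) / 2)))"

definition F :: "nat \<Rightarrow> complex \<Rightarrow> complex" where
  "F k \<tau> = qpoch_inf (- nome \<tau>) (nome \<tau>) / qpoch_inf (nome \<tau>) (nome \<tau>) *
     (2 * f0 2 (4 * int k - 2) \<tau> - f0 1 (4 * int k - 1) \<tau> - f0 1 (4 * int k - 3) \<tau>)"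

end

theory Submission
  imports Defs
begin

text \<open>
  The modulus of F_k factors as |(-q;q)/(q;q)| times |2 f_{0,2,4k-2} - f_{0,1,4k-1} - f_{0,1,4k-3}|,
  and each f_0 is dominated by a geometric series, so the second factor is O(1/y).

  For the first factor, (1 + w)/(1 - w) = exp (sum_n odd_weight n * w^n) with odd_weight n = 2/n
  for odd n and 0 otherwise; applying this to w = q^j and summing over j turns
  log |(-q;q)/(q;q)| into the odd Lambert series sum_n odd_weight n * Re (q^n / (1 - q^n)).
  Bounding every term by 1/(pi n^2 y) only gives pi/(8y), which is twice too much unless y is
  bounded below. When |x| is at most 5y, the Laurent expansion 1/(e^u - 1) = 1/u - 1/2 + O(u)
  together with |tau|^2 >= 2y^2 halves the main term of the first 1/(4 pi |tau|) summands, and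
  the remaining ones add O(1).
  When |x| > 5y, only the term n = 1 is large, and 1 - cos (2 pi x) >= pi^2 x^2 / 2 controls it.
  Either way log |(-q;q)/(q;q)| <= pi/(16y) + O(1) = (pi/4) sqrt N + O(1).
\<close>

lemma infsum_eq_suminf:
  fixes f :: "nat \<Rightarrow> 'a::{topological_comm_monoid_add, t2_space}"
  assumes "f summable_on UNIV"
  shows "infsum f UNIV = suminf f"
  using assms by (metis has_sum_imp_sums has_sum_infsum sums_unique)

lemma suminf_swap_if_summable_on:
  fixes f :: "nat \<Rightarrow> nat \<Rightarrow> 'a::{banach, uniform_topological_group_add}"
  assumes f: "(\<lambda>(j, n). f j n) summable_on UNIV"
  shows "summable (\<lambda>j. \<Sum>n. f j n)" and "summable (\<lambda>n. \<Sum>j. f j n)"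
    and "(\<Sum>j. \<Sum>n. f j n) = (\<Sum>n. \<Sum>j. f j n)"
proof -
  have f': "(\<lambda>(n, j). f j n) summable_on UNIV"
    using summable_on_swap[of "\<lambda>(j, n). f j n" UNIV UNIV] f by simp
  have rows: "f j summable_on UNIV" for j
    using summable_on_SigmaD1[of f UNIV "\<lambda>_. UNIV"] f by auto
  have cols: "(\<lambda>j. f j n) summable_on UNIV" for n
    using summable_on_SigmaD1[of "\<lambda>n j. f j n" UNIV "\<lambda>_. UNIV"] f' by auto
  have R: "(\<lambda>j. \<Sum>n. f j n) summable_on UNIV"
    using summable_on_SigmaD[of "\<lambda>(j, n). f j n" UNIV "\<lambda>_. UNIV"] f rows
    by (simp add: infsum_eq_suminf)
  then show "summable (\<lambda>j. \<Sum>n. f j n)"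
    by (rule summable_on_imp_summable)
  have C: "(\<lambda>n. \<Sum>j. f j n) summable_on UNIV"
    using summable_on_SigmaD[of "\<lambda>(n, j). f j n" UNIV "\<lambda>_. UNIV"] f' cols
    by (simp add: infsum_eq_suminf)
  then show "summable (\<lambda>n. \<Sum>j. f j n)"
    by (rule summable_on_imp_summable)
  show "(\<Sum>j. \<Sum>n. f j n) = (\<Sum>n. \<Sum>j. f j n)"
    using infsum_swap_banach[of f UNIV UNIV] f R C by (simp add: infsum_eq_suminf rows cols)
qed

lemma summable_on_geometric_product:
  fixes r :: real assumes "0 \<le> r" "r < 1"
  shows "(\<lambda>(j, n). r ^ j * r ^ n) summable_on UNIV"
proof -
  have "((\<lambda>n. r ^ j * r ^ n) has_sum (r ^ j / (1 - r))) UNIV" for j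
    using sums_mult[OF geometric_sums[of r], of "r ^ j"] assms
    by (intro sums_nonneg_imp_has_sum) (simp_all add: field_simps)
  moreover have "(\<lambda>j. r ^ j / (1 - r)) summable_on UNIV"
    using assms by (intro summable_nonneg_imp_summable_on summable_divide summable_geometric) auto
  ultimately show ?thesis
    using summable_on_SigmaI[where A = UNIV and B = "\<lambda>_. UNIV" and f = "\<lambda>(j, n). r ^ j * r ^ n"
        and g = "\<lambda>j. r ^ j / (1 - r)"] assms
    by auto
qed

lemma sums_odd_inverse_squares: "(\<lambda>n. (1 - (-1)^n) / (real n)^2) sums (pi^2/4)"
proof -
  have all: "(\<lambda>n. 1 / (real n)^2) sums (pi^2/6)"
    using inverse_squares_sums sums_Suc_iff[of "\<lambda>n. 1 / (real n)^2"] by simp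
  have "(\<lambda>j. (1 + (-1::real)^(2*j)) / (real (2*j))^2) sums (pi^2/12)"
    using sums_mult[OF all, of "1/2"] by (simp add: field_simps)
  moreover have "(1 + (-1::real)^n) / (real n)^2 = 0" if "n \<notin> range (\<lambda>j. 2 * j)" for n
  proof -
    from that have "odd n" by (metis evenE rangeI)
    then show ?thesis by simp
  qed
  ultimately have even: "(\<lambda>n. (1 + (-1)^n) / (real n)^2) sums (pi^2/12)"
    by (subst (asm) sums_mono_reindex[of "\<lambda>j. 2 * j"]) (auto simp: strict_mono_def)
  have "(\<lambda>n. 2 * (1 / (real n)^2) - (1 + (-1)^n) / (real n)^2) sums (2 * (pi^2/6) - pi^2/12)"
    by (intro sums_diff sums_mult all even)
  then show ?thesis
    by (simp add: diff_divide_distrib [symmetric])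
qed

lemma norm_exp_minus_Taylor2_le:
  fixes u :: complex assumes "norm u \<le> 1/2"
  shows "norm (exp u - 1 - u - u^2/2) \<le> norm u ^ 3"
proof -
  have "exp \<bar>Re u\<bar> \<le> exp (1/2)"
    using abs_Re_le_cmod[of u] assms by simp
  also have "\<dots> \<le> 2"
    by (rule exp_half_le2)
  finally have "exp \<bar>Re u\<bar> \<le> 2" .
  from mult_right_mono[OF this, of "norm u ^ 3"]
  have "exp \<bar>Re u\<bar> * norm u ^ 3 / 2 \<le> norm u ^ 3"
    by simp
  moreover have "(\<Sum>k\<le>2. u ^ k / fact k) = 1 + u + u^2/2"
    by (simp add: eval_nat_numeral)
  ultimately show ?thesis
    using Taylor_exp[of u 2] by (simp add: eval_nat_numeral algebra_simps)
qed

lemma norm_inverse_exp_minus_one_Laurent_le: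
  fixes u :: complex assumes u0: "u \<noteq> 0" and u1: "norm u \<le> 1/2"
  shows "norm (1 / (exp u - 1) - 1/u + 1/2) \<le> 3 * norm u"
proof -
  define \<epsilon> where "\<epsilon> = (exp u - 1 - u - u^2/2) / u"
  define D where "D = 1 + u/2 + \<epsilon>"
  have nu: "norm u > 0" using u0 by simp
  have u2: "norm u ^ 2 \<le> 1/4"
    using power_mono[OF u1, of 2] by (simp add: power2_eq_square)
  have \<epsilon>: "norm \<epsilon> \<le> norm u ^ 2"
    using norm_exp_minus_Taylor2_le[OF u1] nu
    by (simp add: \<epsilon>_def norm_divide field_simps power3_eq_cube power2_eq_square)
  have "norm (u/2 + \<epsilon>) \<le> 1/2"
    using norm_triangle_ineq[of "u/2" \<epsilon>] u1 \<epsilon> u2 by (simp add: norm_divide)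
  moreover have "1 \<le> norm D + norm (u/2 + \<epsilon>)"
    using norm_triangle_ineq4[of D "u/2 + \<epsilon>"] by (simp add: D_def)
  ultimately have D: "norm D \<ge> 1/2"
    by linarith
  have exp_eq: "exp u - 1 = u * D"
    using u0 by (simp add: D_def \<epsilon>_def field_simps power2_eq_square)
  have "D \<noteq> 0" using D by auto
  then have "1 / (exp u - 1) - 1/u + 1/2 = (1 - D + u * D/2) / (u * D)"
    using u0 by (simp add: exp_eq field_simps)
  also have "1 - D + u * D/2 = u^2/4 - \<epsilon> * (1 - u/2)"
    by (simp add: D_def algebra_simps power2_eq_square)
  finally have "1 / (exp u - 1) - 1/u + 1/2 = (u^2/4 - \<epsilon> * (1 - u/2)) / (u * D)" .
  moreover have "norm (u^2/4 - \<epsilon> * (1 - u/2)) \<le> 3/2 * norm u ^ 2"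
  proof -
    have "norm (1 - u/2) \<le> 5/4"
      using norm_triangle_ineq4[of 1 "u/2"] u1 by (simp add: norm_divide)
    then have "norm (\<epsilon> * (1 - u/2)) \<le> norm u ^ 2 * (5/4)"
      unfolding norm_mult using \<epsilon> by (intro mult_mono) auto
    then show ?thesis
      using norm_triangle_ineq4[of "u^2/4" "\<epsilon> * (1 - u/2)"] by (simp add: norm_divide norm_power)
  qed
  ultimately have "norm (1 / (exp u - 1) - 1/u + 1/2) \<le> (3/2 * norm u ^ 2) / (norm u * (1/2))"
    using D nu by (simp only: norm_divide norm_mult) (intro frac_le mult_left_mono; simp)
  also have "\<dots> = 3 * norm u"
    using nu by (simp add: power2_eq_square)
  finally show ?thesis .
qed

lemma one_minus_cos_ge:
  fixes x :: real assumes "\<bar>x\<bar> \<le> 1/2"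
  shows "pi^2 * x^2 / 2 \<le> 1 - cos (2 * pi * x)"
proof -
  define s where "s = pi * \<bar>x\<bar>"
  have s0: "0 \<le> s" unfolding s_def by simp
  have "s \<le> pi / 2"
    unfolding s_def using assms mult_left_mono[of "\<bar>x\<bar>" "1/2" pi] by simp
  also have "\<dots> \<le> 1.6"
    using pi_approx by simp
  finally have s2: "s^2 \<le> 3"
    using power_mono[of s "1.6" 2] s0 by (simp add: power2_eq_square)
  have "\<bar>sin s - s\<bar> \<le> s^3 / 6"
    using Maclaurin_sin_bound[of s 3] s0
    by (simp add: eval_nat_numeral lessThan_Suc sin_coeff_def)
  then have "s - sin s \<le> s^3 / 6"
    by (metis abs_le_D2 minus_diff_eq)
  moreover have "s^3 / 6 \<le> s / 2"
    using mult_left_mono[OF s2 s0] by (simp add: power2_eq_square power3_eq_cube)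
  ultimately have "s / 2 \<le> sin s"
    by linarith
  then have "(s/2)^2 \<le> (sin s)^2"
    using s0 by (intro power_mono) auto
  moreover have "cos (2 * pi * x) = cos (2 * s)"
    using cos_abs_real[of "2 * pi * x"] by (simp add: s_def abs_mult mult.assoc)
  then have "cos (2 * pi * x) = 1 - 2 * (sin s)^2"
    by (simp add: cos_double_sin)
  moreover have "(s/2)^2 = pi^2 * x^2 / 4"
    unfolding s_def by (simp add: power_divide power_mult_distrib)
  ultimately show ?thesis
    by linarith
qed

lemma Re_inverse_le:
  fixes z :: complex assumes "0 < Re z" "Re z \<le> \<bar>Im z\<bar>"
  shows "Re (1 / z) \<le> 1 / (2 * Re z)"
proof -
  have "2 * (Re z)^2 \<le> (Re z)^2 + (Im z)^2"
    using assms abs_le_square_iff[of "Re z" "Im z"] by simp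
  then have "Re z / ((Re z)^2 + (Im z)^2) \<le> Re z / (2 * (Re z)^2)"
    using assms by (intro divide_left_mono mult_pos_pos add_pos_nonneg) auto
  then show ?thesis
    using assms by (simp add: Re_divide power2_eq_square)
qed

lemma abs_Re_div_one_minus_le:
  fixes w :: complex assumes "norm w < 1"
  shows "\<bar>Re (w / (1 - w))\<bar> \<le> norm w / (1 - norm w)"
proof -
  have "1 - norm w \<le> norm (1 - w)"
    using norm_triangle_ineq2[of 1 w] by simp
  then have "norm w / norm (1 - w) \<le> norm w / (1 - norm w)"
    using assms by (intro divide_left_mono mult_pos_pos) auto
  then show ?thesis
    using abs_Re_le_cmod[of "w / (1 - w)"] by (simp add: norm_divide)
qed

lemma Re_div_one_minus_le:
  fixes w :: complex and r c :: real
  assumes nw: "norm w = r" and r0: "0 < r" and r1: "r < 1" and rw: "Re w = r * c" and c1: "c < 1"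
  shows "2 * Re (w / (1 - w)) \<le> (1 - r) / (1 - c)"
proof -
  have "(Re w)^2 + (Im w)^2 = r^2"
    using nw cmod_power2[of w] by simp
  then have e: "Re (w / (1 - w)) = r * (c - r) / ((1 - r)^2 + 2 * r * (1 - c))"
    unfolding Re_divide using rw by (simp add: power2_eq_square algebra_simps)
  have d: "0 < 2 * r * (1 - c)" "2 * r * (1 - c) \<le> (1 - r)^2 + 2 * r * (1 - c)"
    using r0 c1 by simp_all
  then have "0 < (1 - r)^2 + 2 * r * (1 - c)"
    by linarith
  show ?thesis
  proof (cases "c \<le> r")
    case True
    then have "Re (w / (1 - w)) \<le> 0"
      unfolding e using r0 \<open>0 < (1 - r)^2 + 2 * r * (1 - c)\<close>
      by (intro divide_nonpos_pos mult_nonneg_nonpos) auto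
    moreover have "0 \<le> (1 - r) / (1 - c)"
      using r1 c1 by simp
    ultimately show ?thesis
      by linarith
  next
    case False
    have "r * (c - r) \<le> r * (1 - r)"
      using c1 r0 by (intro mult_left_mono) auto
    then have "Re (w / (1 - w)) \<le> r * (1 - r) / (2 * r * (1 - c))"
      unfolding e using d False r0 by (intro frac_le) auto
    then have "2 * Re (w / (1 - w)) \<le> 2 * (r * (1 - r) / (2 * r * (1 - c)))"
      by linarith
    also have "\<dots> = (1 - r) / (1 - c)"
      using r0 c1 by (simp add: field_simps)
    finally show ?thesis .
  qed
qed

lemma exp_minus_div_one_minus_le:
  fixes s :: real assumes "s > 0"
  shows "exp (-s) / (1 - exp (-s)) \<le> 1 / s"
proof -
  have "exp (-s) / (1 - exp (-s)) = 1 / (exp s - 1)"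
    using assms by (simp add: exp_minus field_simps)
  moreover have "s \<le> exp s - 1"
    using exp_ge_add_one_self[of s] by linarith
  ultimately show ?thesis
    using assms by (simp add: divide_left_mono)
qed

lemma inverse_squares_tail:
  fixes K :: nat assumes "K \<ge> 1"
  shows summable_inverse_squares_tail: "summable (\<lambda>n. 1 / (real (n + K + 1))^2)"
    and suminf_inverse_squares_tail_le: "(\<Sum>n. 1 / (real (n + K + 1))^2) \<le> 1 / real K"
proof -
  define g where "g n = 1 / real (n + K)" for n
  have "g \<longlonglongrightarrow> 0"
    unfolding g_def using LIMSEQ_ignore_initial_segment[OF lim_inverse_n', of K] by simp
  then have tel: "(\<lambda>n. g n - g (Suc n)) sums (1 / real K)"
    using telescope_sums'[of g 0] by (simp add: g_def)
  have le: "1 / (real (n + K + 1))^2 \<le> g n - g (Suc n)" for n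
  proof -
    have p: "real (n + K) > 0" using assms by simp
    then have "g n - g (Suc n) = 1 / (real (n + K) * real (n + K + 1))"
      unfolding g_def by (simp add: field_simps)
    also have "\<dots> \<ge> 1 / (real (n + K + 1))^2"
      using p by (intro divide_left_mono) (auto simp: power2_eq_square intro!: mult_right_mono)
    finally show ?thesis .
  qed
  show s: "summable (\<lambda>n. 1 / (real (n + K + 1))^2)"
    by (rule summable_comparison_test'[OF sums_summable[OF tel], of 0]) (use le in auto)
  show "(\<Sum>n. 1 / (real (n + K + 1))^2) \<le> 1 / real K"
    using suminf_le[OF le s sums_summable[OF tel]] tel by (simp add: sums_iff)
qed

section \<open>The ratio (-q;q)/(q;q) as an exponential\<close>

definition odd_weight :: "nat \<Rightarrow> real" where
  "odd_weight n = (1 - (-1)^n) / real n"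

lemma odd_weight_0 [simp]: "odd_weight 0 = 0"
  by (simp add: odd_weight_def)

lemma odd_weight_nonneg: "0 \<le> odd_weight n"
  by (cases "even n") (simp_all add: odd_weight_def)

lemma odd_weight_mult_le: "odd_weight n * real n \<le> 2"
  by (cases "even n") (simp_all add: odd_weight_def)

lemma odd_weight_le: "odd_weight n \<le> 2"
proof (cases "n = 0")
  case False
  then have "odd_weight n \<le> odd_weight n * real n"
    using odd_weight_nonneg[of n] by (simp add: mult_le_cancel_left1)
  with odd_weight_mult_le[of n] show ?thesis
    by linarith
qed simp

lemma sums_odd_weight_div: "(\<lambda>n. odd_weight n / real n) sums (pi^2/4)"
  using sums_odd_inverse_squares by (simp add: odd_weight_def power2_eq_square)

lemma odd_weight_div_le: "odd_weight n / real n \<le> 2 / (real n)^2"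
  by (cases "even n") (simp_all add: odd_weight_def power2_eq_square divide_right_mono)

lemma sums_odd_weight_power:
  fixes w :: complex assumes "norm w < 1"
  shows "(\<lambda>n. of_real (odd_weight n) * w^n) sums (ln (1 + w) - ln (1 - w))"
proof -
  have "(\<lambda>n. - ((-w)^n) / of_nat n - - ((-(-w))^n) / of_nat n) sums (ln (1 + w) - ln (1 + (-w)))"
    using Ln_series'[of w] Ln_series'[of "-w"] assms by (intro sums_diff) simp_all
  moreover have "- ((-w)^n) / of_nat n - - ((-(-w))^n) / of_nat n = of_real (odd_weight n) * w^n" for n
    by (cases "n = 0") (simp_all add: odd_weight_def power_minus[of w] field_simps)
  ultimately show ?thesis
    by simp
qed

lemma one_plus_div_one_minus_eq_exp:
  fixes w :: complex assumes "norm w < 1"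
  shows "(1 + w) / (1 - w) = exp (\<Sum>n. of_real (odd_weight n) * w^n)"
proof -
  have "1 + w \<noteq> 0" "1 - w \<noteq> 0"
    using assms by (auto simp: add_eq_0_iff)
  then show ?thesis
    by (simp add: exp_diff flip: sums_unique[OF sums_odd_weight_power[OF assms]])
qed

lemma norm_power_Suc_less_one:
  fixes q :: complex assumes "norm q < 1"
  shows "norm (q ^ Suc j) < 1"
  using assms by (simp add: norm_power power_less_one_iff del: power_Suc)

lemma qpoch_ratio_eq_exp_suminf:
  fixes q :: complex
  assumes q: "norm q < 1" and L: "summable L"
    and factor: "\<And>j. (1 + q ^ Suc j) / (1 - q ^ Suc j) = exp (L j)"
  shows "qpoch_inf (-q) q / qpoch_inf q q = exp (suminf L)"
proof -
  have nz: "1 - q ^ Suc j \<noteq> 0" for j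
    using norm_power_Suc_less_one[OF q, of j] by auto
  have "summable (\<lambda>j. norm q * norm q ^ j)"
    using q by (intro summable_mult summable_geometric) simp
  then have "summable (\<lambda>j. norm (- (q ^ Suc j)))"
    by (simp only: norm_minus_cancel power_Suc norm_mult norm_power)
  moreover have "- (q ^ Suc j) \<noteq> -1" for j
    using nz[of j] by simp
  ultimately have "convergent_prod (\<lambda>j. 1 + - (q ^ Suc j))"
    by (rule summable_imp_convergent_prod_complex)
  then have P: "convergent_prod (\<lambda>j. 1 - q ^ Suc j)"
    by simp
  have Q: "qpoch_inf q q = (\<Prod>j. 1 - q ^ Suc j)"
    by (simp add: qpoch_inf_def)
  have "1 - (-q) * q ^ j = exp (L j) * (1 - q ^ Suc j)" for j
    using factor[of j] nz[of j] by (simp add: field_simps)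
  then have "qpoch_inf (-q) q = exp (suminf L) * qpoch_inf q q"
    unfolding Q qpoch_inf_def
    using prodinf_mult[OF convergent_prod_exp[OF L] P] prodinf_exp[OF L] by simp
  moreover have "qpoch_inf q q \<noteq> 0"
    unfolding Q by (rule prodinf_nonzero[OF P nz])
  ultimately show ?thesis
    by simp
qed

lemma norm_odd_weight_power_Suc_le:
  fixes q :: complex assumes "norm q < 1"
  shows "norm (of_real (odd_weight n) * (q ^ Suc j) ^ n) \<le> 2 * (norm q ^ j * norm q ^ n)"
proof (cases "n = 0")
  case False
  then have "norm q ^ (Suc j * n) \<le> norm q ^ (j + n)"
    using assms by (intro power_decreasing) (auto simp: Suc_le_eq elim!: not0_implies_Suc)
  then have "norm q ^ (Suc j * n) \<le> norm q ^ j * norm q ^ n"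
    by (simp add: power_add)
  moreover have "norm (of_real (odd_weight n) * (q ^ Suc j) ^ n) = odd_weight n * norm q ^ (Suc j * n)"
    unfolding power_mult norm_mult norm_power norm_of_real
    using odd_weight_nonneg[of n] by simp
  ultimately show ?thesis
    using odd_weight_le[of n] by (simp add: mult_mono)
qed simp

lemma suminf_odd_weight_power_Suc:
  fixes q :: complex assumes "norm q < 1"
  shows "(\<Sum>j. of_real (odd_weight n) * (q ^ Suc j) ^ n) = of_real (odd_weight n) * (q^n / (1 - q^n))"
proof (cases "n = 0")
  case False
  have "norm (q ^ n) < 1"
    using assms False by (simp add: norm_power power_less_one_iff)
  then have "(\<lambda>j. q^n * (q^n)^j) sums (q^n / (1 - q^n))"
    using sums_mult[OF geometric_sums, of "q^n" "q^n"] by simp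
  from sums_mult[OF this, of "of_real (odd_weight n)"]
  have "(\<lambda>j. of_real (odd_weight n) * (q ^ Suc j) ^ n) sums (of_real (odd_weight n) * (q^n / (1 - q^n)))"
    by (simp only: power_mult[symmetric] power_add[symmetric] mult_Suc) (simp add: mult.commute)
  then show ?thesis
    by (rule sums_unique[symmetric])
qed simp

lemma odd_weight_lambert_expansion:
  fixes q :: complex assumes q: "norm q < 1"
  shows summable_odd_weight_lambert: "summable (\<lambda>n. of_real (odd_weight n) * (q^n / (1 - q^n)))"
    and qpoch_ratio_eq_exp:
      "qpoch_inf (-q) q / qpoch_inf q q = exp (\<Sum>n. of_real (odd_weight n) * (q^n / (1 - q^n)))"
proof -
  define f where "f j n = of_real (odd_weight n) * (q ^ Suc j) ^ n" for j n
  have "(\<lambda>x. norm ((\<lambda>(j, n). f j n) x)) summable_on UNIV"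
    by (rule Infinite_Sum.abs_summable_on_comparison_test'[OF summable_on_cmult_right[OF
          summable_on_geometric_product[of "norm q"], of 2]])
      (use q norm_odd_weight_power_Suc_le[OF q] in \<open>auto simp: f_def\<close>)
  then have f: "(\<lambda>(j, n). f j n) summable_on UNIV"
    by (rule abs_summable_summable)
  note column = suminf_odd_weight_power_Suc[OF q, folded f_def]
  show "summable (\<lambda>n. of_real (odd_weight n) * (q^n / (1 - q^n)))"
    using suminf_swap_if_summable_on(2)[OF f] by (simp add: column)
  have "(1 + q ^ Suc j) / (1 - q ^ Suc j) = exp (\<Sum>n. f j n)" for j
    unfolding f_def by (rule one_plus_div_one_minus_eq_exp[OF norm_power_Suc_less_one[OF q]])
  from qpoch_ratio_eq_exp_suminf[OF q suminf_swap_if_summable_on(1)[OF f] this]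
  show "qpoch_inf (-q) q / qpoch_inf q q = exp (\<Sum>n. of_real (odd_weight n) * (q^n / (1 - q^n)))"
    using suminf_swap_if_summable_on(3)[OF f] by (simp add: column)
qed

lemma norm_nome_power: "norm (nome \<tau> ^ n) = exp (- 2 * pi * real n * Im \<tau>)"
proof -
  have "nome \<tau> ^ n = exp (of_nat n * (2 * pi * \<i> * \<tau>))"
    unfolding nome_def by (simp add: exp_of_nat_mult)
  then show ?thesis
    by simp
qed

definition odd_lambert :: "complex \<Rightarrow> nat \<Rightarrow> real" where
  "odd_lambert \<tau> n = odd_weight n * Re (nome \<tau> ^ n / (1 - nome \<tau> ^ n))"

lemma norm_qpoch_ratio_nome:
  assumes "Im \<tau> > 0"
  shows "norm (qpoch_inf (- nome \<tau>) (nome \<tau>) / qpoch_inf (nome \<tau>) (nome \<tau>))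
           = exp (\<Sum>n. odd_lambert \<tau> n)"
proof -
  have q: "norm (nome \<tau>) < 1"
    using norm_nome_power[of \<tau> 1] assms by simp
  have "Re (of_real (odd_weight n) * (nome \<tau> ^ n / (1 - nome \<tau> ^ n))) = odd_lambert \<tau> n" for n
    unfolding odd_lambert_def scaleR_conv_of_real[symmetric] by simp
  then show ?thesis
    using qpoch_ratio_eq_exp[OF q] Re_suminf[OF summable_odd_weight_lambert[OF q]] by simp
qed

section \<open>Estimates for the odd Lambert series\<close>

lemma abs_odd_lambert_le:
  assumes "Im \<tau> > 0"
  shows "\<bar>odd_lambert \<tau> n\<bar> \<le> odd_weight n / real n / (2 * pi * Im \<tau>)"
proof (cases "n = 0")
  case False
  define s where "s = 2 * pi * real n * Im \<tau>"
  have s: "s > 0"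
    using False assms by (simp add: s_def)
  have "norm (nome \<tau> ^ n) = exp (-s)"
    by (simp add: s_def norm_nome_power)
  then have "\<bar>Re (nome \<tau> ^ n / (1 - nome \<tau> ^ n))\<bar> \<le> 1 / s"
    using abs_Re_div_one_minus_le[of "nome \<tau> ^ n"] exp_minus_div_one_minus_le[OF s] s by simp
  then have "\<bar>odd_lambert \<tau> n\<bar> \<le> odd_weight n * (1 / s)"
    unfolding odd_lambert_def abs_mult abs_of_nonneg[OF odd_weight_nonneg]
    by (rule mult_left_mono[OF _ odd_weight_nonneg])
  also have "\<dots> = odd_weight n / real n / (2 * pi * Im \<tau>)"
    by (simp add: s_def)
  finally show ?thesis .
qed (simp add: odd_lambert_def)

lemma summable_odd_lambert:
  assumes "Im \<tau> > 0"
  shows "summable (odd_lambert \<tau>)"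
  by (rule summable_comparison_test'[OF summable_divide[OF sums_summable[OF sums_odd_weight_div]]])
    (use abs_odd_lambert_le[OF assms] in auto)

lemma suminf_odd_lambert_le:
  assumes "Im \<tau> > 0"
  shows "(\<Sum>n. odd_lambert \<tau> n) \<le> pi / (8 * Im \<tau>)"
proof -
  have "odd_lambert \<tau> n \<le> odd_weight n / real n / (2 * pi * Im \<tau>)" for n
    using abs_odd_lambert_le[OF assms, of n] by linarith
  then have "(\<Sum>n. odd_lambert \<tau> n) \<le> (pi^2/4) / (2 * pi * Im \<tau>)"
    by (rule sums_le[OF _ summable_sums[OF summable_odd_lambert[OF assms]]
          sums_divide[OF sums_odd_weight_div]])
  also have "\<dots> = pi / (8 * Im \<tau>)"
    by (simp add: power2_eq_square)
  finally show ?thesis .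
qed

lemma odd_lambert_le_near_zero:
  fixes x y :: real
  assumes y: "0 < y" and yx: "y \<le> \<bar>x\<bar>" and n: "1 \<le> n"
    and small: "2 * pi * real n * cmod (Complex x y) \<le> 1/2"
  shows "odd_lambert (Complex x y) n \<le> odd_weight n / real n / (4 * pi * y) + 12 * pi * cmod (Complex x y)"
proof -
  define \<tau> where "\<tau> = Complex x y"
  define t where "t = cmod \<tau>"
  define u where "u = - (of_nat n * (2 * pi * \<i> * \<tau>))"
  have t: "t > 0"
    using y by (simp add: t_def \<tau>_def complex_eq_iff)
  have nu: "norm u = 2 * pi * real n * t"
    by (simp add: u_def t_def norm_mult)
  then have "u \<noteq> 0" "norm u \<le> 1/2"
    using t n small by (auto simp: t_def \<tau>_def)
  then have Laurent: "Re (1 / (exp u - 1)) \<le> Re (1 / u) - 1/2 + 3 * norm u"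
    using norm_inverse_exp_minus_one_Laurent_le complex_Re_le_cmod order_trans
    by fastforce
  have eu: "exp u = inverse (nome \<tau> ^ n)"
    unfolding u_def nome_def by (simp add: exp_minus exp_of_nat_mult)
  have "nome \<tau> ^ n \<noteq> 1"
    using norm_nome_power[of \<tau> n] y n by (auto simp: \<tau>_def)
  moreover have "nome \<tau> ^ n \<noteq> 0"
    by (simp add: nome_def)
  ultimately have frac: "nome \<tau> ^ n / (1 - nome \<tau> ^ n) = 1 / (exp u - 1)"
    unfolding eu by (simp add: field_simps)
  have Re_u: "Re u = 2 * pi * real n * y" and "\<bar>Im u\<bar> = 2 * pi * real n * \<bar>x\<bar>"
    by (simp_all add: u_def \<tau>_def abs_mult)
  then have "Re (1 / u) \<le> 1 / (2 * Re u)"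
    using y n yx by (intro Re_inverse_le) auto
  also have "\<dots> = 1 / (4 * pi * real n * y)"
    unfolding Re_u by simp
  finally have "Re (nome \<tau> ^ n / (1 - nome \<tau> ^ n)) \<le> 1 / (4 * pi * real n * y) + 6 * pi * real n * t"
    using Laurent nu unfolding frac by simp
  then have "odd_lambert \<tau> n \<le> odd_weight n * (1 / (4 * pi * real n * y) + 6 * pi * real n * t)"
    unfolding odd_lambert_def by (rule mult_left_mono[OF _ odd_weight_nonneg])
  also have "\<dots> = odd_weight n / real n / (4 * pi * y) + (odd_weight n * real n) * (6 * pi * t)"
    using y n by (simp add: field_simps)
  also have "\<dots> \<le> odd_weight n / real n / (4 * pi * y) + 2 * (6 * pi * t)"
    using odd_weight_mult_le[of n] t by (intro add_left_mono mult_right_mono) auto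
  finally show ?thesis
    by (simp add: \<tau>_def t_def)
qed

lemma sum_odd_lambert_initial_le:
  fixes x y :: real and K :: nat
  assumes y: "0 < y" and yx: "y \<le> \<bar>x\<bar>" and K: "4 * pi * real K * cmod (Complex x y) \<le> 1"
  shows "(\<Sum>i<K+1. odd_lambert (Complex x y) i) \<le> pi / (16 * y) + 3 + 12 * pi * cmod (Complex x y)"
proof -
  define t where "t = cmod (Complex x y)"
  have t: "0 \<le> t" by (simp add: t_def)
  have "odd_lambert (Complex x y) i \<le> odd_weight i / real i / (4 * pi * y) + 12 * pi * t" if "i < K + 1" for i
  proof (cases "i = 0")
    case False
    have "2 * pi * real i * t \<le> 2 * pi * real K * t"
      using that t by (intro mult_right_mono) auto
    moreover have "4 * pi * real K * t \<le> 1"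
      using K by (simp add: t_def)
    ultimately have "2 * pi * real i * cmod (Complex x y) \<le> 1/2"
      unfolding t_def by linarith
    with False show ?thesis
      using odd_lambert_le_near_zero[OF y yx] by (simp add: t_def)
  qed (simp add: odd_lambert_def t)
  then have "(\<Sum>i<K+1. odd_lambert (Complex x y) i)
               \<le> (\<Sum>i<K+1. odd_weight i / real i / (4 * pi * y) + 12 * pi * t)"
    by (intro sum_mono) auto
  also have "\<dots> = (\<Sum>i<K+1. odd_weight i / real i) / (4 * pi * y) + real (K + 1) * (12 * pi * t)"
    by (simp only: sum.distrib sum_divide_distrib sum_constant card_lessThan)
  also have "(\<Sum>i<K+1. odd_weight i / real i) \<le> pi^2/4"
    using sum_le_suminf[OF sums_summable[OF sums_odd_weight_div], of "{..<K+1}"]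
      sums_unique[OF sums_odd_weight_div] odd_weight_nonneg by auto
  also have "real (K + 1) * (12 * pi * t) = 3 * (4 * pi * real K * t) + 12 * pi * t"
    by (simp add: algebra_simps)
  also have "\<dots> \<le> 3 + 12 * pi * t"
    using K by (simp add: t_def)
  finally show ?thesis
    using y by (simp add: t_def power2_eq_square divide_right_mono)
qed

lemma suminf_odd_lambert_tail_le:
  assumes y: "Im \<tau> > 0" and K: "K \<ge> 1"
  shows "(\<Sum>n. odd_lambert \<tau> (n + (K + 1))) \<le> 1 / (pi * Im \<tau> * real K)"
proof -
  have le: "odd_lambert \<tau> (n + (K + 1)) \<le> 1 / (pi * Im \<tau>) * (1 / (real (n + K + 1))^2)" for n
  proof -
    have "odd_lambert \<tau> (n + (K + 1)) \<le> odd_weight (n + (K + 1)) / real (n + (K + 1)) / (2 * pi * Im \<tau>)"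
      using abs_odd_lambert_le[OF y, of "n + (K + 1)"] by linarith
    also have "\<dots> \<le> 2 / (real (n + (K + 1)))^2 / (2 * pi * Im \<tau>)"
      using divide_right_mono[OF odd_weight_div_le[of "n + (K + 1)"], of "2 * pi * Im \<tau>"] y
      by simp
    finally show ?thesis
      by (simp add: field_simps)
  qed
  have "(\<Sum>n. odd_lambert \<tau> (n + (K + 1))) \<le> (\<Sum>n. 1 / (pi * Im \<tau>) * (1 / (real (n + K + 1))^2))"
    by (rule suminf_le[OF le summable_ignore_initial_segment[OF summable_odd_lambert[OF y]]
          summable_mult[OF summable_inverse_squares_tail[OF K]]])
  also have "\<dots> = 1 / (pi * Im \<tau>) * (\<Sum>n. 1 / (real (n + K + 1))^2)"
    by (rule suminf_mult[OF summable_inverse_squares_tail[OF K]])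
  also have "\<dots> \<le> 1 / (pi * Im \<tau>) * (1 / real K)"
    using y by (intro mult_left_mono suminf_inverse_squares_tail_le[OF K]) auto
  finally show ?thesis
    by simp
qed

lemma suminf_odd_lambert_le_small_modulus:
  fixes x y :: real
  assumes y: "0 < y" and x: "y \<le> \<bar>x\<bar>" and small: "4 * pi * cmod (Complex x y) \<le> 1"
  shows "(\<Sum>n. odd_lambert (Complex x y) n) \<le> pi / (16 * y) + 6 + 8 * cmod (Complex x y) / y"
proof -
  define t where "t = cmod (Complex x y)"
  have t: "0 < t"
    using y by (simp add: t_def complex_eq_iff)
  \<comment> \<open>Cut the series where the Laurent expansion of the summands stops being accurate.\<close>
  define M where "M = 1 / (4 * pi * t)"
  define K where "K = nat \<lfloor>M\<rfloor>"
  have M1: "1 \<le> M"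
    using small t by (simp add: M_def t_def)
  then have K: "real K \<le> M" "M < real K + 1" "K \<ge> 1"
    by (simp_all add: K_def le_nat_iff)
  have "4 * pi * real K * t \<le> 4 * pi * M * t"
    using K t by (intro mult_right_mono) auto
  also have "\<dots> = 1"
    using t by (simp add: M_def)
  finally have "(\<Sum>i<K+1. odd_lambert (Complex x y) i) \<le> pi / (16 * y) + 3 + 12 * pi * t"
    using sum_odd_lambert_initial_le[OF y x] by (simp add: t_def)
  then have head: "(\<Sum>i<K+1. odd_lambert (Complex x y) i) \<le> pi / (16 * y) + 6"
    using small by (simp add: t_def)
  have "M < 2 * real K"
    using K by linarith
  then have "1 / real K \<le> 2 / M"
    using M1 by (simp add: field_simps)
  also have "2 / M = 8 * pi * t"
    by (simp add: M_def)
  finally have "1 / (pi * y) * (1 / real K) \<le> 1 / (pi * y) * (8 * pi * t)"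
    using y by (intro mult_left_mono) auto
  then have tail: "(\<Sum>n. odd_lambert (Complex x y) (n + (K + 1))) \<le> 8 * t / y"
    using suminf_odd_lambert_tail_le[of "Complex x y" K] y K by simp
  show ?thesis
    using suminf_split_initial_segment[OF summable_odd_lambert, of "Complex x y" "K + 1"] head tail y
    by (simp add: t_def)
qed

lemma suminf_odd_lambert_le_near_diagonal:
  fixes x y :: real
  assumes y: "0 < y" "y < 1/100" and x: "y \<le> \<bar>x\<bar>" "\<bar>x\<bar> \<le> 5 * y"
  shows "(\<Sum>n. odd_lambert (Complex x y) n) \<le> pi / (16 * y) + 54"
proof -
  define t where "t = cmod (Complex x y)"
  have "x^2 \<le> 25 * y^2"
    using x abs_le_square_iff[of x "5 * y"] y by (simp add: power_mult_distrib)
  moreover have "t^2 = x^2 + y^2"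
    by (simp add: t_def cmod_power2)
  ultimately have "t^2 \<le> 36 * y^2"
    using zero_le_power2[of y] by linarith
  then have "t^2 \<le> (6 * y)^2"
    by (simp add: power_mult_distrib)
  then have t6: "t \<le> 6 * y"
    by (rule power2_le_imp_le) (use y in simp)
  have "pi * t \<le> 4 * (6 * y)"
    using mult_mono[OF less_imp_le[OF pi_less_4] t6] by (simp add: t_def)
  then have "4 * pi * t \<le> 1"
    using y by linarith
  moreover have "8 * t / y \<le> 48"
    using t6 y by (simp add: field_simps)
  ultimately show ?thesis
    using suminf_odd_lambert_le_small_modulus[OF y(1) x(1)] by (simp add: t_def)
qed

lemma two_Re_nome_div_one_minus_le:
  fixes x y :: real
  assumes y: "0 < y" and x: "5 * y < \<bar>x\<bar>" "\<bar>x\<bar> \<le> 1/2"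
  shows "2 * Re (nome (Complex x y) / (1 - nome (Complex x y))) \<le> 4 / (25 * pi * y)"
proof -
  define q where "q = nome (Complex x y)"
  define r where "r = exp (- 2 * pi * y)"
  have r: "norm q = r" "0 < r" "r < 1"
    using norm_nome_power[of "Complex x y" 1] y by (simp_all add: q_def r_def)
  have Re_q: "Re q = r * cos (2 * pi * x)"
    by (simp add: q_def nome_def r_def Re_exp)
  have "(5 * y)^2 < x^2"
    using power_strict_mono[OF x(1), of 2] y by simp
  then have "pi^2 * (25 * y^2) / 2 < pi^2 * x^2 / 2"
    by (simp add: power_mult_distrib)
  then have cos: "pi^2 * (25 * y^2) / 2 < 1 - cos (2 * pi * x)"
    using one_minus_cos_ge[OF x(2)] by linarith
  moreover have "0 < pi^2 * (25 * y^2) / 2"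
    using y by simp
  ultimately have "cos (2 * pi * x) < 1"
    by linarith
  then have "2 * Re (q / (1 - q)) \<le> (1 - r) / (1 - cos (2 * pi * x))"
    by (rule Re_div_one_minus_le[OF r Re_q])
  also have "\<dots> \<le> (2 * pi * y) / (pi^2 * (25 * y^2) / 2)"
    using exp_ge_add_one_self[of "- 2 * pi * y"] cos y by (intro frac_le) (auto simp: r_def)
  also have "\<dots> = 4 / (25 * pi * y)"
    using y by (simp add: field_simps power2_eq_square)
  finally show ?thesis
    by (simp add: q_def)
qed

lemma suminf_odd_lambert_le_far_from_diagonal:
  fixes x y :: real
  assumes y: "0 < y" and x: "5 * y < \<bar>x\<bar>" "\<bar>x\<bar> \<le> 1/2"
  shows "(\<Sum>n. odd_lambert (Complex x y) n) \<le> pi / (16 * y)"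
proof -
  define \<tau> where "\<tau> = Complex x y"
  have Im: "Im \<tau> > 0"
    using y by (simp add: \<tau>_def)
  have tail_sums: "(\<lambda>n. odd_weight (n + 2) / real (n + 2) / (2 * pi * y)) sums ((pi^2/4 - 2) / (2 * pi * y))"
    using sums_divide[OF sums_split_initial_segment[OF sums_odd_weight_div, of 2]]
    by (simp add: eval_nat_numeral odd_weight_def)
  have "odd_lambert \<tau> (n + 2) \<le> odd_weight (n + 2) / real (n + 2) / (2 * pi * y)" for n
    using abs_odd_lambert_le[OF Im, of "n + 2"] by (simp add: \<tau>_def)
  then have tail: "(\<Sum>n. odd_lambert \<tau> (n + 2)) \<le> (pi^2/4 - 2) / (2 * pi * y)"
    by (rule sums_le[OF _ summable_sums[OF summable_ignore_initial_segment[OF summable_odd_lambert[OF Im], of 2]]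
          tail_sums])
  have initial: "(\<Sum>i<2. odd_lambert \<tau> i) \<le> 4 / (25 * pi * y)"
    using two_Re_nome_div_one_minus_le[OF y x]
    by (simp add: eval_nat_numeral odd_lambert_def odd_weight_def \<tau>_def)
  have "pi^2 \<le> 3.2^2"
    using pi_approx by (intro power_mono) auto
  then have "50 * pi^2 - 336 \<le> 25 * pi^2"
    by (simp add: power2_eq_square)
  have "(pi^2/4 - 2) / (2 * pi * y) + 4 / (25 * pi * y) = (50 * pi^2 - 336) / (400 * pi * y)"
    using y by (simp add: field_simps power2_eq_square)
  also have "\<dots> \<le> (25 * pi^2) / (400 * pi * y)"
    using \<open>50 * pi^2 - 336 \<le> 25 * pi^2\<close> y by (intro divide_right_mono) auto
  also have "\<dots> = pi / (16 * y)"
    by (simp add: power2_eq_square)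
  finally show ?thesis
    using suminf_split_initial_segment[OF summable_odd_lambert[OF Im], of 2] tail initial
    by (simp add: \<tau>_def)
qed

lemma suminf_odd_lambert_le_cusp:
  fixes x y :: real
  assumes y: "0 < y" and x: "y \<le> \<bar>x\<bar>" "\<bar>x\<bar> \<le> 1/2"
  shows "(\<Sum>n. odd_lambert (Complex x y) n) \<le> pi / (16 * y) + 54"
proof (cases "y < 1/100")
  case True
  then show ?thesis
    using suminf_odd_lambert_le_near_diagonal[OF y True x(1)]
      suminf_odd_lambert_le_far_from_diagonal[OF y _ x(2)]
    by (cases "\<bar>x\<bar> \<le> 5 * y") auto
next
  case False
  have "pi / (16 * y) \<le> pi / (16 * (1/100))"
    using False y by (intro divide_left_mono) auto
  also have "\<dots> \<le> 54"
    using pi_less_4 by simp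
  finally show ?thesis
    using suminf_odd_lambert_le[of "Complex x y"] y by simp
qed

lemma norm_f0_le:
  assumes y: "Im \<tau> > 0" and a: "a \<ge> 1" and b: "b \<ge> 1"
  shows "norm (f0 a b \<tau>) \<le> 1 / (2 * pi * Im \<tau>)"
proof -
  define r where "r = exp (- (2 * pi * Im \<tau>))"
  have r: "0 \<le> r" "r < 1"
    using y by (auto simp: r_def)
  define T where "T m = (-1) ^ Suc m * exp (2 * pi * \<i> * \<tau> *
      of_real ((of_int a * real (Suc m) ^ 2 + of_int b * real (Suc m)) / 2))" for m
  have T: "norm (T m) \<le> r * r ^ m" for m
  proof -
    define n where "n = real (Suc m)"
    define s where "s = (of_int a * n ^ 2 + of_int b * n) / 2"
    have n: "1 \<le> n" by (simp add: n_def)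
    then have "n \<le> of_int a * n ^ 2" "n \<le> of_int b * n"
      using a b mult_mono[of 1 "of_int a" n "n^2"] by (auto simp: power2_eq_square)
    then have "n \<le> s"
      by (simp add: s_def)
    have "norm (T m) = exp (- (2 * pi * Im \<tau> * s))"
      unfolding T_def n_def[symmetric] s_def[symmetric] by (simp add: norm_mult norm_power)
    also have "\<dots> \<le> exp (- (2 * pi * Im \<tau> * n))"
      using \<open>n \<le> s\<close> y by simp
    also have "\<dots> = exp (real (Suc m) * (- (2 * pi * Im \<tau>)))"
      by (simp add: n_def algebra_simps)
    also have "\<dots> = r ^ Suc m"
      unfolding r_def by (rule exp_of_nat_mult)
    finally show ?thesis
      by simp
  qed
  have geometric: "(\<lambda>m. r * r ^ m) sums (r / (1 - r))"
    using sums_mult[OF geometric_sums[of r], of r] r by (simp add: field_simps)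
  have summable: "summable (\<lambda>m. norm (T m))"
    by (rule summable_comparison_test'[OF sums_summable[OF geometric], of 0]) (use T in simp)
  have "norm (f0 a b \<tau>) \<le> (\<Sum>m. norm (T m))"
    unfolding f0_def Let_def T_def[symmetric] by (rule summable_norm[OF summable])
  also have "\<dots> \<le> r / (1 - r)"
    using suminf_le[OF T summable sums_summable[OF geometric]] geometric by (simp add: sums_iff)
  also have "\<dots> \<le> 1 / (2 * pi * Im \<tau>)"
    using exp_minus_div_one_minus_le[of "2 * pi * Im \<tau>"] y by (simp add: r_def)
  finally show ?thesis .
qed

lemma norm_f0_combination_le:
  assumes "Im \<tau> > 0" and "k \<ge> 1"
  shows "norm (2 * f0 2 (4 * int k - 2) \<tau> - f0 1 (4 * int k - 1) \<tau> - f0 1 (4 * int k - 3) \<tau>)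
           \<le> 2 / (pi * Im \<tau>)"
proof -
  have triangle: "norm (2 * A - B - C) \<le> 2 * norm A + norm B + norm C" for A B C :: complex
  proof -
    have "norm (2 * A - B - C) \<le> norm (2 * A) + norm B + norm C"
      using norm_triangle_ineq4[of "2 * A - B" C] norm_triangle_ineq4[of "2 * A" B] by linarith
    then show ?thesis
      by (simp add: norm_mult)
  qed
  have "norm (2 * f0 2 (4 * int k - 2) \<tau> - f0 1 (4 * int k - 1) \<tau> - f0 1 (4 * int k - 3) \<tau>)
          \<le> 2 * norm (f0 2 (4 * int k - 2) \<tau>) + norm (f0 1 (4 * int k - 1) \<tau>)
             + norm (f0 1 (4 * int k - 3) \<tau>)"
    by (rule triangle)
  also have "\<dots> \<le> 2 * (1 / (2 * pi * Im \<tau>)) + 1 / (2 * pi * Im \<tau>) + 1 / (2 * pi * Im \<tau>)"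
    using norm_f0_le[OF assms(1)] assms(2) by (intro add_mono mult_left_mono) auto
  also have "\<dots> = 2 / (pi * Im \<tau>)"
    by simp
  finally show ?thesis .
qed

lemma norm_F_le:
  fixes x y :: real
  assumes "k \<ge> 1" and y: "0 < y" and x: "y \<le> \<bar>x\<bar>" "\<bar>x\<bar> \<le> 1/2"
  shows "norm (F k (Complex x y)) \<le> exp (pi / (16 * y) + 54) * (2 / (pi * y))"
proof -
  have Im: "Im (Complex x y) > 0"
    using y by simp
  have "exp (\<Sum>n. odd_lambert (Complex x y) n) \<le> exp (pi / (16 * y) + 54)"
    using suminf_odd_lambert_le_cusp[OF y x] by simp
  then show ?thesis
    unfolding F_def norm_mult norm_qpoch_ratio_nome[OF Im]
    using norm_f0_combination_le[OF Im assms(1)] by (intro mult_mono) auto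
qed

theorem proposition2p3:
  fixes k :: nat
  assumes "k \<ge> 1"
  shows "\<exists>C. \<forall>N::real. \<forall>x::real. \<forall>y::real.
           N > 0 \<longrightarrow> y = 1 / (4 * sqrt N) \<longrightarrow> y \<le> \<bar>x\<bar> \<longrightarrow> \<bar>x\<bar> \<le> 1/2 \<longrightarrow>
           norm (F k (Complex x y)) \<le> C * sqrt N * exp (pi / 4 * sqrt N)"
proof (intro exI allI impI)
  fix N x y :: real
  assume N: "N > 0" and yN: "y = 1 / (4 * sqrt N)" and x: "y \<le> \<bar>x\<bar>" "\<bar>x\<bar> \<le> 1/2"
  have "0 < y"
    using N yN by simp
  then have "norm (F k (Complex x y)) \<le> exp (pi / (16 * y) + 54) * (2 / (pi * y))"
    by (rule norm_F_le[OF assms _ x])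
  also have "pi / (16 * y) = pi / 4 * sqrt N"
    using N unfolding yN by (simp add: field_simps)
  also have "2 / (pi * y) = 8 / pi * sqrt N"
    using N unfolding yN by (simp add: field_simps)
  also have "exp (pi / 4 * sqrt N + 54) * (8 / pi * sqrt N) = (8 * exp 54 / pi) * sqrt N * exp (pi / 4 * sqrt N)"
    by (simp add: exp_add)
  finally show "norm (F k (Complex x y)) \<le> (8 * exp 54 / pi) * sqrt N * exp (pi / 4 * sqrt N)" .
qed

end
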